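(* Let $p\ge 1$, let $g_2,g_4,\dots,g_{2p}$ be real numbers with $g_{2p}>0$, let $Q(x)=\sum_{j=1}^{p} g_{2j}x^{2j}$ and let $N>0$. Let $P_n(x)=x^n+\cdots$ ($n\ge 0$) be the monic orthogonal polynomials with respect to the weight $e^{-NQ(x)}$ on $\mathbb{R}$, i.e. $\int_{-\infty}^{\infty}P_k(x)P_l(x)e^{-NQ(x)}\,dx=\delta_{kl}h_k$ with $h_k>0$, and set $P_{-1}=0$. They satisfy $xP_n(x)=P_{n+1}(x)+r_nP_{n-1}(x)$ for $n\ge 0$, with $r_0=0$. For $n\ge 1$ and $j\ge 1$ put $(L^{j})_{n,n-1}=h_{n-1}^{-1}\int_{-\infty}^{\infty}x^{j}P_n(x)P_{n-1}(x)e^{-NQ(x)}\,dx$, and define the formal power series in $\lambda^{-1}$ $$U_n(\lambda)=1+2\sum_{k\ge 1}(L^{2k-1})_{n,n-1}\lambda^{-k}\quad(n\ge 1),\qquad U_0(\lambda)=1.$$ Then for every $n\ge 1$, as formal Laurent series in $\lambda^{-1}$, $$\lambda\,(U_{n+1}-U_n)=r_{n+1}(U_{n+2}+U_{n+1})-r_n(U_n+U_{n-1})$$ and $$r_n\,(U_n+U_{n-1})(U_n+U_{n+1})=\lambda\,(U_n^2-1).$$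
   Context: The recurrence coefficients $r_n$ (depending on $N$) are those of the three-term recurrence of the monic orthogonal polynomials; because $Q$ is even, no diagonal term $s_nP_n$ appears. $(L^j)_{n,n-1}$ is the $(n,n-1)$ matrix element of the $j$-th power of the Jacobi (Lax) operator $LP_n=P_{n+1}+r_nP_{n-1}$. *)

theory Defs
  imports "HOL-Analysis.Analysis" "HOL-Computational_Algebra.Polynomial"
    "HOL-Computational_Algebra.Formal_Laurent_Series"
begin

text \<open>The even potential Q(x) = sum_{j=1}^p g_{2j} x^{2j}; here g j stands for g_{2j}.\<close>
definition Qpot :: "nat \<Rightarrow> (nat \<Rightarrow> real) \<Rightarrow> real \<Rightarrow> real" where
  "Qpot p g x = (\<Sum>j=1..p. g j * x ^ (2 * j))"

definition wt :: "real \<Rightarrow> nat \<Rightarrow> (nat \<Rightarrow> real) \<Rightarrow> real \<Rightarrow> real" where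
  "wt N p g x = exp (- N * Qpot p g x)"

definition hnorm :: "real \<Rightarrow> nat \<Rightarrow> (nat \<Rightarrow> real) \<Rightarrow> (nat \<Rightarrow> real poly) \<Rightarrow> nat \<Rightarrow> real" where
  "hnorm N p g P k = (\<integral>x. poly (P k) x * poly (P k) x * wt N p g x \<partial>lborel)"

definition Lsub :: "real \<Rightarrow> nat \<Rightarrow> (nat \<Rightarrow> real) \<Rightarrow> (nat \<Rightarrow> real poly) \<Rightarrow> nat \<Rightarrow> nat \<Rightarrow> real" where
  "Lsub N p g P j n =
     (\<integral>x. x ^ j * poly (P n) x * poly (P (n - 1)) x * wt N p g x \<partial>lborel) / hnorm N p g P (n - 1)"

text \<open>U_n as a formal power series in the variable X = lambda^{-1}.\<close>
definition Ufps :: "real \<Rightarrow> nat \<Rightarrow> (nat \<Rightarrow> real) \<Rightarrow> (nat \<Rightarrow> real poly) \<Rightarrow> nat \<Rightarrow> real fps" where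
  "Ufps N p g P n =
     (if n = 0 then 1
      else Abs_fps (\<lambda>k. if k = 0 then 1 else 2 * Lsub N p g P (2 * k - 1) n))"

definition U :: "real \<Rightarrow> nat \<Rightarrow> (nat \<Rightarrow> real) \<Rightarrow> (nat \<Rightarrow> real poly) \<Rightarrow> nat \<Rightarrow> real fls" where
  "U N p g P n = fps_to_fls (Ufps N p g P n)"

abbreviation lam :: "real fls" where
  "lam \<equiv> fls_X_inv"

end

theory Submission
  imports Defs
begin

text \<open>
  Write \<open>\<langle>q\<rangle>\<close> for \<open>\<integral> q w\<close> and \<open>D\<^sub>j(a,b) = \<langle>x\<^sup>j P\<^sub>a P\<^sub>b\<rangle>\<close>, so that
  \<open>(L\<^sup>j)\<^sub>a\<^sub>b = D\<^sub>j(a,b)/h\<^sub>b\<close>. Multiplying by \<open>x\<close> and using the three-term recurrence on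
  either factor gives \<open>D\<^sub>j\<^sub>+\<^sub>1(a,b) = D\<^sub>j(a+1,b) + r\<^sub>a D\<^sub>j(a-1,b)\<close>; with orthogonality this yields
  \<open>h\<^sub>n\<^sub>+\<^sub>1 = r\<^sub>n\<^sub>+\<^sub>1 h\<^sub>n\<close> and the two relations
  \<open>(L\<^sup>j\<^sup>+\<^sup>1)\<^sub>n\<^sub>+\<^sub>1\<^sub>,\<^sub>n - (L\<^sup>j\<^sup>+\<^sup>1)\<^sub>n\<^sub>,\<^sub>n\<^sub>-\<^sub>1 = r\<^sub>n\<^sub>+\<^sub>1 (L\<^sup>j)\<^sub>n\<^sub>+\<^sub>1\<^sub>,\<^sub>n\<^sub>+\<^sub>1 - r\<^sub>n (L\<^sup>j)\<^sub>n\<^sub>-\<^sub>1\<^sub>,\<^sub>n\<^sub>-\<^sub>1\<close> and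
  \<open>(L\<^sup>j\<^sup>+\<^sup>1)\<^sub>n\<^sub>,\<^sub>n = (L\<^sup>j)\<^sub>n\<^sub>+\<^sub>1\<^sub>,\<^sub>n + (L\<^sup>j)\<^sub>n\<^sub>,\<^sub>n\<^sub>-\<^sub>1\<close>. Combining them for odd powers is the
  first identity coefficientwise. The second identity is a first integral of the first one:
  the difference of its two sides at \<open>n+1\<close> and at \<open>n\<close> is \<open>(U\<^sub>n + U\<^sub>n\<^sub>+\<^sub>1)\<close> times the first
  identity, and at \<open>n = 0\<close> both sides vanish.
\<close>

lemma telescoped_product_identity:
  fixes U c :: "nat \<Rightarrow> 'a::comm_ring_1" and l :: 'a
  assumes step: "\<And>n. l * (U (Suc n) - U n) = c (Suc n) * (U (n + 2) + U (Suc n)) - c n * (U n + U (n - 1))"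
    and "c 0 = 0" and "U 0 = 1"
  shows "c n * (U n + U (n - 1)) * (U n + U (Suc n)) = l * ((U n)\<^sup>2 - 1)"
proof (induction n)
  case 0
  then show ?case using assms(2,3) by simp
next
  case (Suc m)
  have "c (Suc m) * (U (Suc m) + U m) * (U (Suc m) + U (m + 2)) - l * ((U (Suc m))\<^sup>2 - 1)
     = (c m * (U m + U (m - 1)) * (U m + U (Suc m)) - l * ((U m)\<^sup>2 - 1))
       + (U m + U (Suc m)) * ((c (Suc m) * (U (m + 2) + U (Suc m)) - c m * (U m + U (m - 1)))
           - l * (U (Suc m) - U m))"
    by (simp add: algebra_simps power2_eq_square)
  also have "\<dots> = 0"
    unfolding Suc.IH step[of m] by simp
  finally show ?case
    by simp
qed

lemma fls_X_inv_times_X: "fls_X_inv * (fls_X :: 'a::field fls) = 1"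
  by (metis fls_X_inv_nonzero fls_inverse_X_inv right_inverse)

locale monic_orthogonal_polys =
  fixes w :: "real \<Rightarrow> real" and P :: "nat \<Rightarrow> real poly" and r :: "nat \<Rightarrow> real"
  assumes weight_nonneg: "\<And>x. w x \<ge> 0"
    and weight_measurable: "w \<in> borel_measurable borel"
    and monic: "\<And>k. degree (P k) = k \<and> lead_coeff (P k) = 1"
    and orthogonal: "\<And>k l. k \<noteq> l \<Longrightarrow> (\<integral>x. poly (P k) x * poly (P l) x * w x \<partial>lborel) = 0"
    and norm_pos: "\<And>k. (\<integral>x. poly (P k) x * poly (P k) x * w x \<partial>lborel) > 0"
    and recurrence: "\<And>m. [:0, 1:] * P m = P (Suc m) + smult (r m) (if m = 0 then 0 else P (m - 1))"
    and r_0: "r 0 = 0"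
begin

lemma P_0: "P 0 = 1"
  using monic[of 0] by (metis degree_0_id one_pCons)

lemma P_nonzero: "P k \<noteq> 0"
  using monic[of k] by auto

lemma recurrence': "[:0, 1:] * P m = P (Suc m) + smult (r m) (P (m - 1))"
  using recurrence[of m] r_0 by (cases m) auto

lemma measurable_poly_weight: "(\<lambda>x. poly q x * w x) \<in> borel_measurable lborel"
  unfolding measurable_lborel2
  by (intro borel_measurable_times borel_measurable_continuous_onI continuous_intros weight_measurable)

text \<open>A non-integrable function has integral \<open>0\<close>, so \<open>h\<^sub>k > 0\<close> already forces integrability;
  no growth condition on the weight is needed.\<close>
lemma integrable_square: "integrable lborel (\<lambda>x. poly (P k) x * poly (P k) x * w x)"
  using norm_pos[of k] not_integrable_integral_eq by fastforce

lemma integrable_product: "integrable lborel (\<lambda>x. poly (P a * P b) x * w x)"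
proof (rule Bochner_Integration.integrable_bound)
  show "integrable lborel (\<lambda>x. poly (P a) x * poly (P a) x * w x + poly (P b) x * poly (P b) x * w x)"
    using integrable_square by (intro Bochner_Integration.integrable_add)
  show "AE x in lborel. norm (poly (P a * P b) x * w x)
      \<le> norm (poly (P a) x * poly (P a) x * w x + poly (P b) x * poly (P b) x * w x)"
  proof (rule AE_I2)
    fix x
    define u v where "u = poly (P a) x" and "v = poly (P b) x"
    have "2 * \<bar>u\<bar> * \<bar>v\<bar> \<le> u * u + v * v"
      using sum_squares_bound[of "\<bar>u\<bar>" "\<bar>v\<bar>"] by (simp add: power2_eq_square)
    moreover have "0 \<le> \<bar>u\<bar> * \<bar>v\<bar>"
      by simp
    ultimately have "\<bar>u * v\<bar> \<le> u * u + v * v"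
      unfolding abs_mult by linarith
    then have "\<bar>u * v\<bar> * w x \<le> (u * u + v * v) * w x"
      using weight_nonneg by (intro mult_right_mono) auto
    then show "norm (poly (P a * P b) x * w x)
      \<le> norm (poly (P a) x * poly (P a) x * w x + poly (P b) x * poly (P b) x * w x)"
      using weight_nonneg[of x]
      by (simp add: u_def[symmetric] v_def[symmetric] abs_mult distrib_right)
  qed
qed (rule measurable_poly_weight)

text \<open>Peel off the leading term with the monic product \<open>P\<^sub>a P\<^sub>b\<close>, \<open>a + b = deg q\<close>.\<close>
lemma integrable_poly_weight: "integrable lborel (\<lambda>x. poly q x * w x)"
proof -
  have "integrable lborel (\<lambda>x. poly q x * w x)" if "degree q \<le> d" for d q
    using that
  proof (induction d arbitrary: q)
    case 0
    define c where "c = coeff q 0"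
    have "q = [:c:]"
      using 0 by (simp add: c_def degree_0_id)
    moreover have "integrable lborel (\<lambda>x. c * (poly (P 0 * P 0) x * w x))"
      using integrable_product by (rule integrable_mult_right)
    ultimately show ?case
      by (simp add: P_0)
  next
    case (Suc d)
    define a b where "a = Suc d - Suc d div 2" and "b = Suc d div 2"
    define c where "c = coeff q (Suc d)"
    have degree_ab: "degree (P a * P b) = Suc d"
      by (simp add: degree_mult_eq P_nonzero monic a_def b_def)
    have coeff_ab: "coeff (P a * P b) (Suc d) = 1"
      by (metis degree_ab lead_coeff_mult monic mult_1)
    define q' where "q' = q - smult c (P a * P b)"
    have "degree q' \<le> d"
    proof (rule degree_le, intro allI impI)
      fix i assume "d < i"
      then consider "i = Suc d" | "i > Suc d" by linarith
      then show "coeff q' i = 0"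
        by cases (use Suc.prems degree_ab in \<open>auto simp: q'_def c_def coeff_ab coeff_eq_0\<close>)
    qed
    then have "integrable lborel (\<lambda>x. poly q' x * w x + c * (poly (P a * P b) x * w x))"
      using Suc.IH integrable_product by (intro Bochner_Integration.integrable_add integrable_mult_right)
    moreover have "q = q' + smult c (P a * P b)"
      by (simp add: q'_def)
    ultimately show ?case
      by (simp add: algebra_simps)
  qed
  then show ?thesis
    by blast
qed

definition moment :: "real poly \<Rightarrow> real" where
  "moment q = (\<integral>x. poly q x * w x \<partial>lborel)"

lemma moment_add: "moment (a + b) = moment a + moment b"
  unfolding moment_def using integrable_poly_weight[of a] integrable_poly_weight[of b]
  by (simp add: distrib_right)

lemma moment_smult: "moment (smult c a) = c * moment a"
  unfolding moment_def by (simp add: mult.assoc)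

definition pair_moment :: "nat \<Rightarrow> nat \<Rightarrow> nat \<Rightarrow> real" where
  "pair_moment j a b = moment (monom 1 j * P a * P b)"

definition sqnorm :: "nat \<Rightarrow> real" where
  "sqnorm k = pair_moment 0 k k"

lemma sqnorm_pos: "sqnorm k > 0"
  using norm_pos[of k] by (simp add: sqnorm_def pair_moment_def moment_def mult.assoc)

lemma pair_moment_orthogonal: "a \<noteq> b \<Longrightarrow> pair_moment 0 a b = 0"
  using orthogonal by (simp add: pair_moment_def moment_def mult.assoc)

lemma pair_moment_commute: "pair_moment j a b = pair_moment j b a"
  by (simp add: pair_moment_def mult_ac)

lemma pair_moment_Suc: "pair_moment (Suc j) a b = pair_moment j (Suc a) b + r a * pair_moment j (a - 1) b"
proof -
  have "monom 1 (Suc j) * P a * P b = monom 1 j * ([:0, 1:] * P a) * P b"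
    by (simp add: monom_Suc mult_ac)
  also have "\<dots> = monom 1 j * (P (Suc a) + smult (r a) (P (a - 1))) * P b"
    by (simp only: recurrence')
  also have "\<dots> = monom 1 j * P (Suc a) * P b + smult (r a) (monom 1 j * P (a - 1) * P b)"
    by (simp add: algebra_simps)
  finally show ?thesis
    by (simp add: pair_moment_def moment_add moment_smult)
qed

definition L_entry :: "nat \<Rightarrow> nat \<Rightarrow> nat \<Rightarrow> real" where
  "L_entry j a b = pair_moment j a b / sqnorm b"

lemma L_entry_0: "L_entry 0 a b = (if a = b then 1 else 0)"
  using sqnorm_pos[of b] pair_moment_orthogonal[of a b]
  by (simp add: L_entry_def sqnorm_def)

lemma L_entry_Suc: "L_entry (Suc j) a b = L_entry j (Suc a) b + r a * L_entry j (a - 1) b"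
  by (simp add: L_entry_def pair_moment_Suc add_divide_distrib)

lemma L_entry_transpose: "L_entry j a b = L_entry j b a * sqnorm a / sqnorm b"
  using sqnorm_pos[of a] sqnorm_pos[of b] by (simp add: L_entry_def pair_moment_commute)

lemma sqnorm_Suc: "sqnorm (Suc n) = r (Suc n) * sqnorm n"
proof -
  have "L_entry 1 (Suc n) n = r (Suc n)" "L_entry 1 n (Suc n) = 1"
    using L_entry_Suc[of 0 "Suc n" n] L_entry_Suc[of 0 n "Suc n"] r_0
    by (auto simp: L_entry_0)
  then have "r (Suc n) = sqnorm (Suc n) / sqnorm n"
    using L_entry_transpose[of 1 "Suc n" n] by simp
  then show ?thesis
    using sqnorm_pos[of n] by (simp add: field_simps)
qed

lemma L_entry_transpose_Suc: "L_entry j (Suc n) n = r (Suc n) * L_entry j n (Suc n)"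
  using L_entry_transpose[of j "Suc n" n] sqnorm_pos[of n] by (simp add: sqnorm_Suc)

lemma L_entry_transpose_Suc_Suc: "L_entry j (Suc (Suc n)) n = r (Suc (Suc n)) * r (Suc n) * L_entry j n (Suc (Suc n))"
  using L_entry_transpose[of j "Suc (Suc n)" n] sqnorm_pos[of n] by (simp add: sqnorm_Suc)

text \<open>\<open>(L\<^sup>j)\<^sub>n\<^sub>,\<^sub>n\<^sub>-\<^sub>1\<close>, extended by \<open>0\<close> at \<open>n = 0\<close> so that \<open>U\<^sub>0 = 1\<close> has the same series as the other \<open>U\<^sub>n\<close>.\<close>
definition L_subdiag :: "nat \<Rightarrow> nat \<Rightarrow> real" where
  "L_subdiag j n = (if n = 0 then 0 else L_entry j n (n - 1))"

lemma L_subdiag_1: "L_subdiag 1 n = r n"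
  using L_entry_Suc[of 0 n "n - 1"] r_0 by (cases n) (auto simp: L_subdiag_def L_entry_0)

lemma L_subdiag_Suc_diff:
  "L_subdiag (Suc j) (Suc n) - L_subdiag (Suc j) n
   = r (Suc n) * L_entry j (Suc n) (Suc n) - r n * L_entry j (n - 1) (n - 1)"
proof (cases n)
  case 0
  then show ?thesis
    using L_entry_transpose_Suc[of "Suc j" 0] L_entry_Suc[of j 0 1] r_0 by (simp add: L_subdiag_def)
next
  case (Suc m)
  have "L_entry (Suc j) (Suc (Suc m)) (Suc m)
      = r (Suc (Suc m)) * (L_entry j (Suc (Suc m)) (Suc (Suc m)) + r (Suc m) * L_entry j m (Suc (Suc m)))"
    using L_entry_transpose_Suc[of "Suc j" "Suc m"] L_entry_Suc[of j "Suc m" "Suc (Suc m)"] by simp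
  also have "\<dots> = r (Suc (Suc m)) * L_entry j (Suc (Suc m)) (Suc (Suc m)) + L_entry j (Suc (Suc m)) m"
    using L_entry_transpose_Suc_Suc[of j m] by (simp add: algebra_simps)
  finally show ?thesis
    using Suc L_entry_Suc[of j "Suc m" m] by (simp add: L_subdiag_def)
qed

lemma L_entry_Suc_diagonal: "L_entry (Suc j) n n = L_subdiag j (Suc n) + L_subdiag j n"
  using L_entry_Suc[of j n n] L_entry_transpose_Suc[of j "n - 1"] r_0
  by (cases n) (simp_all add: L_subdiag_def)

lemma L_subdiag_recursion:
  "L_subdiag (j + 2) (Suc n) - L_subdiag (j + 2) n
   = r (Suc n) * (L_subdiag j (n + 2) + L_subdiag j (Suc n)) - r n * (L_subdiag j n + L_subdiag j (n - 1))"
  using L_subdiag_Suc_diff[of "Suc j" n] L_entry_Suc_diagonal[of j "Suc n"] L_entry_Suc_diagonal[of j "n - 1"] r_0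
  by (cases n) auto

definition resolvent_fps :: "nat \<Rightarrow> real fps" where
  "resolvent_fps n = Abs_fps (\<lambda>k. if k = 0 then 1 else 2 * L_subdiag (2 * k - 1) n)"

lemma resolvent_fps_0: "resolvent_fps 0 = 1"
  by (rule fps_ext) (simp add: resolvent_fps_def L_subdiag_def)

lemma resolvent_fps_nth: "resolvent_fps n $ k = (if k = 0 then 1 else 2 * L_subdiag (2 * k - 1) n)"
  by (simp add: resolvent_fps_def)

lemma resolvent_fps_diff:
  "resolvent_fps (Suc n) - resolvent_fps n
   = fps_X * (fps_const (r (Suc n)) * (resolvent_fps (n + 2) + resolvent_fps (Suc n))
             - fps_const (r n) * (resolvent_fps n + resolvent_fps (n - 1)))"
proof (rule fps_ext)
  fix k
  consider "k = 0" | "k = 1" | i where "k = Suc (Suc i)"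
    by (metis One_nat_def not0_implies_Suc)
  then show "(resolvent_fps (Suc n) - resolvent_fps n) $ k
     = (fps_X * (fps_const (r (Suc n)) * (resolvent_fps (n + 2) + resolvent_fps (Suc n))
             - fps_const (r n) * (resolvent_fps n + resolvent_fps (n - 1)))) $ k"
  proof cases
    case 1
    then show ?thesis
      by (simp add: resolvent_fps_nth)
  next
    case 2
    then show ?thesis
      using L_subdiag_1[of n] L_subdiag_1[of "Suc n"] by (simp add: resolvent_fps_nth algebra_simps)
  next
    case 3
    have "2 * k - 1 = (2 * i + 1) + 2" "2 * Suc i - 1 = 2 * i + 1"
      using 3 by simp_all
    then show ?thesis
      using 3 L_subdiag_recursion[of "2 * i + 1" n]
      by (simp only: resolvent_fps_nth fps_X_mult_nth fps_mult_left_const_nth fps_add_nth fps_sub_nth)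
         (simp add: algebra_simps)
  qed
qed

definition resolvent :: "nat \<Rightarrow> real fls" where
  "resolvent n = fps_to_fls (resolvent_fps n)"

lemma resolvent_recursion:
  "fls_X_inv * (resolvent (Suc n) - resolvent n)
   = fls_const (r (Suc n)) * (resolvent (n + 2) + resolvent (Suc n))
     - fls_const (r n) * (resolvent n + resolvent (n - 1))"
proof -
  have "resolvent (Suc n) - resolvent n
      = fls_X * (fls_const (r (Suc n)) * (resolvent (n + 2) + resolvent (Suc n))
                 - fls_const (r n) * (resolvent n + resolvent (n - 1)))"
    unfolding resolvent_def
    by (simp only: fps_to_fls_minus[symmetric] resolvent_fps_diff) (simp add: fls_times_fps_to_fls)
  then show ?thesis
    by (simp add: mult.assoc[symmetric] fls_X_inv_times_X)
qed

lemma resolvent_product: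
  "fls_const (r n) * (resolvent n + resolvent (n - 1)) * (resolvent n + resolvent (Suc n))
   = fls_X_inv * ((resolvent n)\<^sup>2 - 1)"
  by (rule telescoped_product_identity[OF resolvent_recursion])
     (simp_all add: r_0 resolvent_def resolvent_fps_0)

end

theorem theorem1:
  fixes p :: nat and g :: "nat \<Rightarrow> real" and N :: real
    and P :: "nat \<Rightarrow> real poly" and r :: "nat \<Rightarrow> real" and n :: nat
  assumes "p \<ge> 1" and "g p > 0" and "N > 0"
    and monic: "\<And>k. degree (P k) = k \<and> lead_coeff (P k) = 1"
    and orth: "\<And>k l. k \<noteq> l \<Longrightarrow>
        (\<integral>x. poly (P k) x * poly (P l) x * wt N p g x \<partial>lborel) = 0"
    and hpos: "\<And>k. hnorm N p g P k > 0"
    and rec: "\<And>m. [:0, 1:] * P m = P (Suc m) + smult (r m) (if m = 0 then 0 else P (m - 1))"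
    and r0: "r 0 = 0"
    and "n \<ge> 1"
  shows "lam * (U N p g P (Suc n) - U N p g P n)
           = fls_const (r (Suc n)) * (U N p g P (n + 2) + U N p g P (Suc n))
             - fls_const (r n) * (U N p g P n + U N p g P (n - 1))
       \<and> fls_const (r n) * (U N p g P n + U N p g P (n - 1)) * (U N p g P n + U N p g P (Suc n))
           = lam * ((U N p g P n)\<^sup>2 - 1)"
proof -
  have measurable: "wt N p g \<in> borel_measurable borel"
    unfolding wt_def Qpot_def by (intro borel_measurable_continuous_onI continuous_intros)
  interpret monic_orthogonal_polys "wt N p g" P r
    by unfold_locales (fact measurable monic orth hpos[unfolded hnorm_def] rec r0 | simp add: wt_def)+
  have Lsub_eq: "Lsub N p g P j m = L_subdiag j m" if "m \<noteq> 0" for j m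
    using that by (simp add: Lsub_def L_subdiag_def L_entry_def pair_moment_def moment_def sqnorm_def
        hnorm_def poly_monom mult.assoc)
  have "Ufps N p g P m = resolvent_fps m" for m
    by (rule fps_ext) (simp add: Ufps_def resolvent_fps_nth Lsub_eq L_subdiag_def)
  then have "U N p g P = resolvent"
    by (simp add: fun_eq_iff U_def resolvent_def)
  then show ?thesis
    using resolvent_recursion resolvent_product by simp
qed

end
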